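(* Let $\Phi\subseteq \mathrm{FO}\cup\sim\mathrm{FO}$ (w.l.o.g. no bound variable of a formula coincides with a free variable of the same formula). Let $C$ be a countably infinite set of fresh constant symbols $c^x_\delta$, and define $\Phi_f := \{\gamma(c^{x_1}_\delta,\ldots,c^{x_n}_\delta) \mid \gamma(x_1,\ldots,x_n)\in\Phi\cap\mathrm{FO},\ \sim\delta\in\Phi\cap\sim\mathrm{FO}\}\cup\{\neg\delta(c^{x_1}_\delta,\ldots,c^{x_n}_\delta)\mid \sim\delta(x_1,\ldots,x_n)\in\Phi\cap\sim\mathrm{FO}\}$. Then $\Phi$ is satisfiable in team semantics if and only if $\Phi_f$ is satisfiable in classical first-order semantics.
   Context: In first-order team semantics, an interpretation is $(\mathcal{A},T)$ with $\mathcal{A}$ a first-order structure and $T$ a set of assignments; $(\mathcal{A},T)\models\alpha$ for $\alpha\in\mathrm{FO}$ iff $(\mathcal{A},s)\models\alpha$ for all $s\in T$. The strong negation is $(\mathcal{A},T)\models\sim\varphi$ iff $(\mathcal{A},T)\not\models\varphi$, and $\sim\mathrm{FO}=\{\sim\alpha\mid\alpha\in\mathrm{FO}\}$ is a fragment of the Boolean closure $\mathcal{B}(\mathrm{FO})$ of $\mathrm{FO}$ under $\sim$ and material implication. *)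

theory Defs
  imports Main
begin

datatype ('c, 'f, 'v) trm =
    Var 'v
  | Cst 'c
  | Fn 'f "('c, 'f, 'v) trm list"

datatype ('c, 'f, 'p, 'v) fm =
    Eq "('c, 'f, 'v) trm" "('c, 'f, 'v) trm"
  | Rel 'p "('c, 'f, 'v) trm list"
  | Neg "('c, 'f, 'p, 'v) fm"
  | Conj "('c, 'f, 'p, 'v) fm" "('c, 'f, 'p, 'v) fm"
  | Disj "('c, 'f, 'p, 'v) fm" "('c, 'f, 'p, 'v) fm"
  | Ex 'v "('c, 'f, 'p, 'v) fm"
  | All 'v "('c, 'f, 'p, 'v) fm"

record ('a, 'c, 'f, 'p) struc =
  cst_i :: "'c \<Rightarrow> 'a"
  fun_i :: "'f \<Rightarrow> 'a list \<Rightarrow> 'a"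
  rel_i :: "'p \<Rightarrow> 'a list \<Rightarrow> bool"

primrec eval :: "('a, 'c, 'f, 'p, 'z) struc_scheme \<Rightarrow> ('v \<Rightarrow> 'a) \<Rightarrow> ('c, 'f, 'v) trm \<Rightarrow> 'a" where
  "eval A s (Var x) = s x"
| "eval A s (Cst c) = cst_i A c"
| "eval A s (Fn f ts) = fun_i A f (map (eval A s) ts)"

primrec sat :: "('a, 'c, 'f, 'p, 'z) struc_scheme \<Rightarrow> ('v \<Rightarrow> 'a) \<Rightarrow> ('c, 'f, 'p, 'v) fm \<Rightarrow> bool" where
  "sat A s (Eq t u) = (eval A s t = eval A s u)"
| "sat A s (Rel p ts) = rel_i A p (map (eval A s) ts)"
| "sat A s (Neg \<phi>) = (\<not> sat A s \<phi>)"
| "sat A s (Conj \<phi> \<psi>) = (sat A s \<phi> \<and> sat A s \<psi>)"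
| "sat A s (Disj \<phi> \<psi>) = (sat A s \<phi> \<or> sat A s \<psi>)"
| "sat A s (Ex x \<phi>) = (\<exists>a. sat A (s(x := a)) \<phi>)"
| "sat A s (All x \<phi>) = (\<forall>a. sat A (s(x := a)) \<phi>)"

text \<open>Bound occurrences are left untouched; \<sigma> will only produce closed terms
  (constants), so no variable capture can occur.\<close>
primrec tsubst :: "('v \<Rightarrow> ('c2, 'f, 'v) trm) \<Rightarrow> ('c \<Rightarrow> 'c2) \<Rightarrow> ('c, 'f, 'v) trm \<Rightarrow> ('c2, 'f, 'v) trm" where
  "tsubst \<sigma> g (Var x) = \<sigma> x"
| "tsubst \<sigma> g (Cst c) = Cst (g c)"
| "tsubst \<sigma> g (Fn f ts) = Fn f (map (tsubst \<sigma> g) ts)"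

primrec fsubst :: "('v \<Rightarrow> ('c2, 'f, 'v) trm) \<Rightarrow> ('c \<Rightarrow> 'c2) \<Rightarrow> ('c, 'f, 'p, 'v) fm \<Rightarrow> ('c2, 'f, 'p, 'v) fm" where
  "fsubst \<sigma> g (Eq t u) = Eq (tsubst \<sigma> g t) (tsubst \<sigma> g u)"
| "fsubst \<sigma> g (Rel p ts) = Rel p (map (tsubst \<sigma> g) ts)"
| "fsubst \<sigma> g (Neg \<phi>) = Neg (fsubst \<sigma> g \<phi>)"
| "fsubst \<sigma> g (Conj \<phi> \<psi>) = Conj (fsubst \<sigma> g \<phi>) (fsubst \<sigma> g \<psi>)"
| "fsubst \<sigma> g (Disj \<phi> \<psi>) = Disj (fsubst \<sigma> g \<phi>) (fsubst \<sigma> g \<psi>)"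
| "fsubst \<sigma> g (Ex x \<phi>) = Ex x (fsubst (\<sigma>(x := Var x)) g \<phi>)"
| "fsubst \<sigma> g (All x \<phi>) = All x (fsubst (\<sigma>(x := Var x)) g \<phi>)"

text \<open>The fresh constants c^x_\<delta> are Inr (x, \<delta>); old constants are embedded by Inl.\<close>
type_synonym ('c, 'f, 'p, 'v) fresh_cst = "'c + ('v \<times> ('c, 'f, 'p, 'v) fm)"

definition inst :: "('c, 'f, 'p, 'v) fm \<Rightarrow> ('c, 'f, 'p, 'v) fm
    \<Rightarrow> (('c, 'f, 'p, 'v) fresh_cst, 'f, 'p, 'v) fm" where
  "inst \<delta> \<gamma> = fsubst (\<lambda>x. Cst (Inr (x, \<delta>))) Inl \<gamma>"

datatype ('c, 'f, 'p, 'v) tfm =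
    TFO "('c, 'f, 'p, 'v) fm"
  | TSneg "('c, 'f, 'p, 'v) fm"

primrec team_sat :: "('a, 'c, 'f, 'p, 'z) struc_scheme \<Rightarrow> ('v \<Rightarrow> 'a) set \<Rightarrow> ('c, 'f, 'p, 'v) tfm \<Rightarrow> bool" where
  "team_sat A T (TFO \<alpha>) = (\<forall>s\<in>T. sat A s \<alpha>)"
| "team_sat A T (TSneg \<alpha>) = (\<not> (\<forall>s\<in>T. sat A s \<alpha>))"

definition Phi_f :: "('c, 'f, 'p, 'v) tfm set \<Rightarrow> (('c, 'f, 'p, 'v) fresh_cst, 'f, 'p, 'v) fm set" where
  "Phi_f \<Phi> = {inst \<delta> \<gamma> | \<gamma> \<delta>. TFO \<gamma> \<in> \<Phi> \<and> TSneg \<delta> \<in> \<Phi>}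
           \<union> {Neg (inst \<delta> \<delta>) | \<delta>. TSneg \<delta> \<in> \<Phi>}"

definition team_satisfiable :: "'a itself \<Rightarrow> ('c, 'f, 'p, 'v) tfm set \<Rightarrow> bool" where
  "team_satisfiable (_ :: 'a itself) \<Phi> \<longleftrightarrow>
     (\<exists>(A :: ('a, 'c, 'f, 'p) struc) (T :: ('v \<Rightarrow> 'a) set). \<forall>\<phi>\<in>\<Phi>. team_sat A T \<phi>)"

definition fo_satisfiable :: "'a itself \<Rightarrow> ('c, 'f, 'p, 'v) fm set \<Rightarrow> bool" where
  "fo_satisfiable (_ :: 'a itself) \<Psi> \<longleftrightarrow>
     (\<exists>(B :: ('a, 'c, 'f, 'p) struc). \<forall>\<psi>\<in>\<Psi>. \<forall>s :: 'v \<Rightarrow> 'a. sat B s \<psi>)"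

end

theory Submission
  imports Defs
begin

text \<open>A team model (A, T) of \<Phi> yields a model of \<Phi>_f: choose for each \<sim>\<delta> \<in> \<Phi> an
  assignment s_\<delta> \<in> T falsifying \<delta> and interpret the constant c^x_\<delta> as s_\<delta> x; every
  \<gamma> \<in> \<Phi> \<inter> FO holds at s_\<delta> because it holds throughout T. Conversely, a model B of \<Phi>_f
  determines the assignments s_\<delta> x := (c^x_\<delta>)^B, and the team of all these satisfies \<Phi>
  in the reduct of B to the original constants. Both directions rest on the substitution
  lemma: \<gamma>(c^x_\<delta>, ...) holds in B iff \<gamma> holds at s_\<delta>.\<close>

lemma eval_tsubst:
  assumes \<sigma>: "\<forall>y. (\<sigma> y = Var y \<and> s' y = s y) \<or> (\<exists>c. \<sigma> y = Cst c \<and> s' y = cst_i B c)"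
    and cst: "\<forall>c. cst_i B (g c) = cst_i A c" and "fun_i B = fun_i A"
  shows "eval B s (tsubst \<sigma> g t) = eval A s' t"
proof (induction t)
  case (Var x)
  then show ?case using \<sigma> by (metis eval.simps(1,2) tsubst.simps(1))
next
  case (Cst c)
  then show ?case using cst by simp
next
  case (Fn f ts)
  then show ?case using \<open>fun_i B = fun_i A\<close> by (simp cong: map_cong)
qed

lemma sat_fsubst:
  assumes "\<forall>y. (\<sigma> y = Var y \<and> s' y = s y) \<or> (\<exists>c. \<sigma> y = Cst c \<and> s' y = cst_i B c)"
    and cst: "\<forall>c. cst_i B (g c) = cst_i A c" and funs: "fun_i B = fun_i A"
    and rels: "rel_i B = rel_i A"
  shows "sat B s (fsubst \<sigma> g \<phi>) = sat A s' \<phi>"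
  using assms(1)
proof (induction \<phi> arbitrary: \<sigma> s s')
  case (Eq t u)
  then show ?case using eval_tsubst[OF _ cst funs, of \<sigma> s' s] by simp
next
  case (Rel p ts)
  then show ?case using eval_tsubst[OF _ cst funs, of \<sigma> s' s] rels by (simp cong: map_cong)
next
  case (Ex x \<phi>)
  have "sat B (s(x := a)) (fsubst (\<sigma>(x := Var x)) g \<phi>) = sat A (s'(x := a)) \<phi>" for a
    by (rule Ex.IH) (use Ex.prems in auto)
  then show ?case by simp
next
  case (All x \<phi>)
  have "sat B (s(x := a)) (fsubst (\<sigma>(x := Var x)) g \<phi>) = sat A (s'(x := a)) \<phi>" for a
    by (rule All.IH) (use All.prems in auto)
  then show ?case by simp
qed auto

definition fresh_assign ::
    "('a, ('c, 'f, 'p, 'v) fresh_cst, 'f, 'p) struc \<Rightarrow> ('c, 'f, 'p, 'v) fm \<Rightarrow> 'v \<Rightarrow> 'a" where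
  "fresh_assign B \<delta> = (\<lambda>x. cst_i B (Inr (x, \<delta>)))"

definition old_reduct ::
    "('a, ('c, 'f, 'p, 'v) fresh_cst, 'f, 'p) struc \<Rightarrow> ('a, 'c, 'f, 'p) struc" where
  "old_reduct B = \<lparr>cst_i = cst_i B \<circ> Inl, fun_i = fun_i B, rel_i = rel_i B\<rparr>"

definition fresh_expansion ::
    "('a, 'c, 'f, 'p) struc \<Rightarrow> (('c, 'f, 'p, 'v) fm \<Rightarrow> 'v \<Rightarrow> 'a)
      \<Rightarrow> ('a, ('c, 'f, 'p, 'v) fresh_cst, 'f, 'p) struc" where
  "fresh_expansion A S =
     \<lparr>cst_i = case_sum (cst_i A) (\<lambda>(x, \<delta>). S \<delta> x), fun_i = fun_i A, rel_i = rel_i A\<rparr>"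

lemma old_reduct_fresh_expansion [simp]: "old_reduct (fresh_expansion A S) = A"
  by (simp add: old_reduct_def fresh_expansion_def comp_def)

lemma fresh_assign_fresh_expansion [simp]: "fresh_assign (fresh_expansion A S) = S"
  by (simp add: fresh_assign_def fresh_expansion_def fun_eq_iff)

lemma sat_inst: "sat B s (inst \<delta> \<gamma>) = sat (old_reduct B) (fresh_assign B \<delta>) \<gamma>"
  unfolding inst_def fresh_assign_def
  by (rule sat_fsubst) (auto simp: old_reduct_def)

lemma sat_Phi_f_fresh_expansion:
  assumes team: "\<forall>\<phi>\<in>\<Phi>. team_sat A T \<phi>"
    and S: "\<And>\<delta>. TSneg \<delta> \<in> \<Phi> \<Longrightarrow> S \<delta> \<in> T \<and> \<not> sat A (S \<delta>) \<delta>"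
    and "\<psi> \<in> Phi_f \<Phi>"
  shows "sat (fresh_expansion A S) s \<psi>"
  using \<open>\<psi> \<in> Phi_f \<Phi>\<close> team S by (fastforce simp: Phi_f_def sat_inst)

lemma team_sat_fresh_assign_team:
  assumes B: "\<forall>\<psi>\<in>Phi_f \<Phi>. \<forall>s. sat B s \<psi>" and "\<phi> \<in> \<Phi>"
  shows "team_sat (old_reduct B) {fresh_assign B \<delta> | \<delta>. TSneg \<delta> \<in> \<Phi>} \<phi>"
proof (cases \<phi>)
  case (TFO \<gamma>)
  have "sat (old_reduct B) (fresh_assign B \<delta>) \<gamma>" if "TSneg \<delta> \<in> \<Phi>" for \<delta>
  proof -
    have "inst \<delta> \<gamma> \<in> Phi_f \<Phi>"
      using that TFO \<open>\<phi> \<in> \<Phi>\<close> by (auto simp: Phi_f_def)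
    then show ?thesis using B by (metis sat_inst)
  qed
  then show ?thesis using TFO by auto
next
  case (TSneg \<delta>)
  then have "Neg (inst \<delta> \<delta>) \<in> Phi_f \<Phi>"
    using \<open>\<phi> \<in> \<Phi>\<close> by (auto simp: Phi_f_def)
  then have "\<not> sat (old_reduct B) (fresh_assign B \<delta>) \<delta>"
    using B by (fastforce simp: sat_inst)
  then show ?thesis using TSneg \<open>\<phi> \<in> \<Phi>\<close> by auto
qed

theorem mainTheorem5:
  fixes \<Phi> :: "('c, 'f, 'p, 'v) tfm set"
  shows "team_satisfiable TYPE('a) \<Phi> \<longleftrightarrow> fo_satisfiable TYPE('a) (Phi_f \<Phi>)"
proof
  assume "team_satisfiable TYPE('a) \<Phi>"
  then obtain A :: "('a, 'c, 'f, 'p) struc" and T :: "('v \<Rightarrow> 'a) set"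
    where team: "\<forall>\<phi>\<in>\<Phi>. team_sat A T \<phi>"
    unfolding team_satisfiable_def by blast
  then have "\<forall>\<delta>. \<exists>s. TSneg \<delta> \<in> \<Phi> \<longrightarrow> s \<in> T \<and> \<not> sat A s \<delta>"
    by fastforce
  then obtain S where "\<And>\<delta>. TSneg \<delta> \<in> \<Phi> \<Longrightarrow> S \<delta> \<in> T \<and> \<not> sat A (S \<delta>) \<delta>"
    by metis
  with team show "fo_satisfiable TYPE('a) (Phi_f \<Phi>)"
    unfolding fo_satisfiable_def by (blast intro: sat_Phi_f_fresh_expansion)
next
  assume "fo_satisfiable TYPE('a) (Phi_f \<Phi>)"
  then obtain B :: "('a, ('c, 'f, 'p, 'v) fresh_cst, 'f, 'p) struc"
    where "\<forall>\<psi>\<in>Phi_f \<Phi>. \<forall>s :: 'v \<Rightarrow> 'a. sat B s \<psi>"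
    unfolding fo_satisfiable_def by blast
  then show "team_satisfiable TYPE('a) \<Phi>"
    unfolding team_satisfiable_def by (blast intro: team_sat_fresh_assign_team)
qed

end
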